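(* Let $H\in(\frac12,1)$, $\theta>0$, let $B$ be a fractional Brownian motion with Hurst index $H$, let $\xi_t=\int_0^t e^{-\theta s}\,dB_s$ (continuous version), $\xi_\infty=\int_0^\infty e^{-\theta r}\,dB_r$, and $X_t=e^{\theta t}\xi_t$ (the solution of $X_0=0$, $dX_t=\theta X_tdt+dB_t$). Then, as $t\to\infty$, $$e^{-2\theta t}\int_0^t X_s^2\,ds=e^{-2\theta t}\int_0^t e^{2\theta s}\xi_s^2\,ds\longrightarrow\frac{\xi_\infty^2}{2\theta}\quad\text{almost surely.}$$
   Context: A fractional Brownian motion with Hurst index $H$ is a centered Gaussian process $(B_t)_{t\ge0}$, $B_0=0$, with covariance $E(B_tB_s)=\frac12(t^{2H}+s^{2H}-|t-s|^{2H})$. The integrals of the deterministic function $e^{-\theta s}$ against $B$ are Wiener (equivalently, on finite intervals, Young) integrals; $\xi_\infty$ is the $L^2$ and almost sure limit of $\xi_t$. *)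

theory Defs
  imports "HOL-Probability.Probability"
begin

definition normal_rv :: "'a measure \<Rightarrow> ('a \<Rightarrow> real) \<Rightarrow> bool" where
  "normal_rv M X \<longleftrightarrow> X \<in> borel_measurable M \<and>
     ((\<exists>\<mu> \<sigma>. \<sigma> > 0 \<and> distributed M lborel X (normal_density \<mu> \<sigma>)) \<or>
      (\<exists>c. AE \<omega> in M. X \<omega> = c))"

definition fBm :: "'a measure \<Rightarrow> real \<Rightarrow> (real \<Rightarrow> 'a \<Rightarrow> real) \<Rightarrow> bool" where
  "fBm M H B \<longleftrightarrow> prob_space M \<and>
     (\<forall>t\<ge>0. B t \<in> borel_measurable M) \<and>
     (AE \<omega> in M. B 0 \<omega> = 0) \<and>
     (\<forall>I c. finite I \<longrightarrow> I \<subseteq> {0..} \<longrightarrow> normal_rv M (\<lambda>\<omega>. \<Sum>t\<in>I. c t * B t \<omega>)) \<and>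
     (\<forall>t\<ge>0. integrable M (B t) \<and> integral\<^sup>L M (B t) = 0) \<and>
     (\<forall>s\<ge>0. \<forall>t\<ge>0. integral\<^sup>L M (\<lambda>\<omega>. B t \<omega> * B s \<omega>) =
        (t powr (2*H) + s powr (2*H) - \<bar>t - s\<bar> powr (2*H)) / 2)"

definition has_RS_integral :: "(real \<Rightarrow> real) \<Rightarrow> (real \<Rightarrow> real) \<Rightarrow> real \<Rightarrow> real \<Rightarrow> real \<Rightarrow> bool" where
  "has_RS_integral f g a b I \<longleftrightarrow>
     (\<forall>\<epsilon>>0. \<exists>\<delta>>0. \<forall>(n::nat) (p::nat \<Rightarrow> real) (\<tau>::nat \<Rightarrow> real).
        p 0 = a \<and> p n = b \<and> (\<forall>i<n. p i \<le> \<tau> i \<and> \<tau> i \<le> p (Suc i) \<and> p (Suc i) - p i < \<delta>)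
        \<longrightarrow> \<bar>(\<Sum>i<n. f (\<tau> i) * (g (p (Suc i)) - g (p i))) - I\<bar> < \<epsilon>)"

definition RS_integral :: "(real \<Rightarrow> real) \<Rightarrow> (real \<Rightarrow> real) \<Rightarrow> real \<Rightarrow> real \<Rightarrow> real" where
  "RS_integral f g a b = (THE I. has_RS_integral f g a b I)"

definition xi :: "real \<Rightarrow> (real \<Rightarrow> 'a \<Rightarrow> real) \<Rightarrow> real \<Rightarrow> 'a \<Rightarrow> real" where
  "xi \<theta> B t \<omega> = RS_integral (\<lambda>s. exp (- \<theta> * s)) (\<lambda>s. B s \<omega>) 0 t"

end

theory Submission
  imports Defs "HOL-Real_Asymp.Real_Asymp"
begin

text \<open>Since \<open>B\<^sub>0 = 0\<close>, integration by parts gives pathwise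
  \<open>\<xi>\<^sub>t = e\<^sup>-\<^sup>\<theta>\<^sup>t B\<^sub>t + \<theta> \<integral>\<^sub>0\<^sup>t e\<^sup>-\<^sup>\<theta>\<^sup>s B\<^sub>s ds\<close>.
  As \<open>E (B\<^sub>t - B\<^sub>s)\<^sup>2 = |t - s| powr 2H\<close>, the \<open>\<ell>\<^sup>2\<close> norm of the level-\<open>k\<close> dyadic
  increments of \<open>B\<close> over a unit interval has mean at most \<open>(2 powr (1/2 - H))\<^sup>k\<close>, which is
  summable exactly because \<open>H > 1/2\<close>. Dyadic chaining together with a Borel--Cantelli argument
  then yields \<open>|B\<^sub>s| \<le> C e\<^sup>\<theta>\<^sup>s\<^sup>/\<^sup>2\<close> almost surely, so \<open>\<xi>\<^sub>t\<close> converges to some \<open>L\<close>.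
  Finally l'Hopital's rule, comparing the derivative \<open>e\<^sup>2\<^sup>\<theta>\<^sup>t \<xi>\<^sub>t\<^sup>2\<close> of
  \<open>\<integral>\<^sub>0\<^sup>t e\<^sup>2\<^sup>\<theta>\<^sup>s \<xi>\<^sub>s\<^sup>2 ds\<close> with that of \<open>e\<^sup>2\<^sup>\<theta>\<^sup>t\<close>, gives the limit \<open>L\<^sup>2 / (2\<theta>)\<close>.\<close>

section \<open>Riemann--Stieltjes integration by parts\<close>

text \<open>On one cell: \<open>f \<tau> \<Delta>g - \<Delta>(f g - G) = (f \<tau> - f v) \<Delta>g + \<Delta>(G - g u \<cdot> f)\<close>, and both
  terms are controlled by the mean value inequality.\<close>
lemma RS_term_by_parts_error:
  fixes f f' g G :: "real \<Rightarrow> real"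
  assumes uv: "u \<le> \<tau>" "\<tau> \<le> v"
    and f: "\<And>z. z \<in> {u..v} \<Longrightarrow> (f has_real_derivative f' z) (at z within {u..v})"
    and f'_bound: "\<And>z. z \<in> {u..v} \<Longrightarrow> \<bar>f' z\<bar> \<le> K"
    and G: "\<And>z. z \<in> {u..v} \<Longrightarrow> (G has_real_derivative g z * f' z) (at z within {u..v})"
    and g_osc: "\<And>z. z \<in> {u..v} \<Longrightarrow> \<bar>g z - g u\<bar> \<le> \<eta>"
  shows "\<bar>f \<tau> * (g v - g u) - ((f v * g v - G v) - (f u * g u - G u))\<bar> \<le> 2 * K * \<eta> * (v - u)"
proof -
  have K: "0 \<le> K" using f'_bound[of u] uv by auto
  have \<eta>: "0 \<le> \<eta>" using g_osc[of u] uv by auto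
  have "\<bar>f \<tau> - f v\<bar> \<le> K * \<bar>\<tau> - v\<bar>"
    using field_differentiable_bound[OF convex_real_interval(5) f, of K \<tau> v] f'_bound uv by auto
  also have "\<dots> \<le> K * (v - u)" using uv K by (intro mult_left_mono) auto
  finally have tag_error: "\<bar>(f \<tau> - f v) * (g v - g u)\<bar> \<le> K * (v - u) * \<eta>"
    unfolding abs_mult using g_osc[of v] uv \<eta> by (intro mult_mono) auto
  have "((\<lambda>s. G s - g u * f s) has_real_derivative (g z - g u) * f' z) (at z within {u..v})"
    if "z \<in> {u..v}" for z
    using DERIV_diff[OF G[OF that] DERIV_cmult[OF f[OF that], of "g u"]] by (simp add: algebra_simps)
  moreover have "norm ((g z - g u) * f' z) \<le> \<eta> * K" if "z \<in> {u..v}" for z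
    using g_osc[OF that] f'_bound[OF that] \<eta> by (auto simp: abs_mult intro!: mult_mono)
  ultimately have antiderivative_error: "\<bar>(G v - g u * f v) - (G u - g u * f u)\<bar> \<le> \<eta> * K * \<bar>v - u\<bar>"
    using field_differentiable_bound[OF convex_real_interval(5), of u v "\<lambda>s. G s - g u * f s" "\<lambda>z. (g z - g u) * f' z" "\<eta> * K" v u] uv
    by simp
  show ?thesis using tag_error antiderivative_error uv by (simp add: abs_le_iff algebra_simps)
qed

lemma has_RS_integral_by_parts:
  fixes f f' g :: "real \<Rightarrow> real"
  assumes ab: "a \<le> b"
    and f: "\<And>z. z \<in> {a..b} \<Longrightarrow> (f has_real_derivative f' z) (at z within {a..b})"
    and f'_cont: "continuous_on {a..b} f'"
    and g_cont: "continuous_on {a..b} g"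
  shows "has_RS_integral f g a b (f b * g b - f a * g a - integral {a..b} (\<lambda>s. g s * f' s))"
  unfolding has_RS_integral_def
proof (intro allI impI)
  fix \<epsilon> :: real assume \<epsilon>: "\<epsilon> > 0"
  obtain K0 where K0: "\<And>z. z \<in> {a..b} \<Longrightarrow> norm (f' z) \<le> K0"
    using continuous_on_compact_bound[OF compact_Icc f'_cont] by metis
  define K where "K = \<bar>K0\<bar> + 1"
  have K: "K > 0" "\<And>z. z \<in> {a..b} \<Longrightarrow> \<bar>f' z\<bar> \<le> K"
    using K0 by (force simp: K_def)+
  define G where "G = (\<lambda>x. integral {a..x} (\<lambda>s. g s * f' s))"
  define F where "F = (\<lambda>x. f x * g x - G x)"
  have G_deriv: "(G has_real_derivative g z * f' z) (at z within {a..b})" if "z \<in> {a..b}" for z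
    unfolding G_def by (rule integral_has_real_derivative[OF continuous_on_mult[OF g_cont f'_cont] that])
  define \<eta> where "\<eta> = \<epsilon> / (2 * K * (b - a + 1))"
  have \<eta>: "\<eta> > 0" using \<epsilon> K ab by (simp add: \<eta>_def)
  obtain \<delta> where \<delta>: "\<delta> > 0"
    and g_osc: "\<And>x y. x \<in> {a..b} \<Longrightarrow> y \<in> {a..b} \<Longrightarrow> \<bar>x - y\<bar> < \<delta> \<Longrightarrow> \<bar>g x - g y\<bar> < \<eta>"
    using compact_uniformly_continuous[OF g_cont compact_Icc] \<eta>
    unfolding uniformly_continuous_on_def dist_real_def by metis
  show "\<exists>\<delta>>0. \<forall>n p \<tau>. p 0 = a \<and> p n = b \<and> (\<forall>i<n. p i \<le> \<tau> i \<and> \<tau> i \<le> p (Suc i) \<and> p (Suc i) - p i < \<delta>) \<longrightarrow>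
      \<bar>(\<Sum>i<n. f (\<tau> i) * (g (p (Suc i)) - g (p i))) - (f b * g b - f a * g a - integral {a..b} (\<lambda>s. g s * f' s))\<bar> < \<epsilon>"
  proof (intro exI[of _ \<delta>] conjI allI impI \<delta>)
    fix n and p \<tau> :: "nat \<Rightarrow> real"
    assume "p 0 = a \<and> p n = b \<and> (\<forall>i<n. p i \<le> \<tau> i \<and> \<tau> i \<le> p (Suc i) \<and> p (Suc i) - p i < \<delta>)"
    hence p: "p 0 = a" "p n = b" and tag: "\<And>i. i < n \<Longrightarrow> p i \<le> \<tau> i \<and> \<tau> i \<le> p (Suc i)"
      and mesh: "\<And>i. i < n \<Longrightarrow> p (Suc i) - p i < \<delta>" by auto
    have "p (min m n) \<le> p (min (Suc m) n)" for m
      using tag[of m] by (cases "m < n") (auto simp: min_def)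
    hence "p (min i n) \<le> p (min j n)" if "i \<le> j" for i j
      using lift_Suc_mono_le[OF _ that, of "\<lambda>m. p (min m n)"] by blast
    hence p_in: "p i \<in> {a..b}" if "i \<le> n" for i
      using that p by (metis atLeastAtMost_iff min.absorb1 le0 order_refl)
    have interval_error: "\<bar>f (\<tau> i) * (g (p (Suc i)) - g (p i)) - (F (p (Suc i)) - F (p i))\<bar>
        \<le> 2 * K * \<eta> * (p (Suc i) - p i)" if i: "i < n" for i
    proof -
      have sub: "{p i..p (Suc i)} \<subseteq> {a..b}" using p_in i by auto
      show ?thesis unfolding F_def
      proof (rule RS_term_by_parts_error)
        fix z assume z: "z \<in> {p i..p (Suc i)}"
        show "(f has_real_derivative f' z) (at z within {p i..p (Suc i)})"
          using DERIV_subset[OF f sub] z sub by blast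
        show "\<bar>f' z\<bar> \<le> K" using K z sub by blast
        show "(G has_real_derivative g z * f' z) (at z within {p i..p (Suc i)})"
          using DERIV_subset[OF G_deriv sub] z sub by blast
        show "\<bar>g z - g (p i)\<bar> \<le> \<eta>"
          using g_osc[of z "p i"] z sub mesh[OF i] by fastforce
      qed (use tag i in auto)
    qed
    have "\<bar>(\<Sum>i<n. f (\<tau> i) * (g (p (Suc i)) - g (p i))) - (F b - F a)\<bar>
        = \<bar>\<Sum>i<n. f (\<tau> i) * (g (p (Suc i)) - g (p i)) - (F (p (Suc i)) - F (p i))\<bar>"
      by (simp only: sum_subtractf[of _ "\<lambda>i. F (p (Suc i)) - F (p i)"]
          sum_lessThan_telescope[of "\<lambda>i. F (p i)"] p)
    also have "\<dots> \<le> (\<Sum>i<n. 2 * K * \<eta> * (p (Suc i) - p i))"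
      by (rule order_trans[OF sum_abs sum_mono]) (simp add: interval_error)
    also have "\<dots> = 2 * K * \<eta> * (b - a)"
      by (simp add: sum_distrib_left[symmetric] sum_lessThan_telescope[of p] p)
    also have "\<dots> = \<epsilon> * ((b - a) / (b - a + 1))"
      using K ab by (simp add: \<eta>_def)
    also have "\<dots> < \<epsilon>"
      using \<epsilon> ab by (simp add: divide_less_eq)
    finally show "\<bar>(\<Sum>i<n. f (\<tau> i) * (g (p (Suc i)) - g (p i))) - (f b * g b - f a * g a - integral {a..b} (\<lambda>s. g s * f' s))\<bar> < \<epsilon>"
      by (simp add: F_def G_def algebra_simps)
  qed
qed

lemma has_RS_integral_unique:
  assumes ab: "a \<le> b" and I: "has_RS_integral f g a b I" and J: "has_RS_integral f g a b J"
  shows "I = J"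
proof -
  have "\<bar>I - J\<bar> < 2 * \<epsilon>" if \<epsilon>: "\<epsilon> > 0" for \<epsilon>
  proof -
    obtain \<delta>I where \<delta>I: "\<delta>I > 0" and RS_I: "\<forall>n p \<tau>. p 0 = a \<and> p n = b \<and>
        (\<forall>i<n. p i \<le> \<tau> i \<and> \<tau> i \<le> p (Suc i) \<and> p (Suc i) - p i < \<delta>I)
        \<longrightarrow> \<bar>(\<Sum>i<n. f (\<tau> i) * (g (p (Suc i)) - g (p i))) - I\<bar> < \<epsilon>"
      using I \<epsilon> unfolding has_RS_integral_def by blast
    obtain \<delta>J where \<delta>J: "\<delta>J > 0" and RS_J: "\<forall>n p \<tau>. p 0 = a \<and> p n = b \<and>
        (\<forall>i<n. p i \<le> \<tau> i \<and> \<tau> i \<le> p (Suc i) \<and> p (Suc i) - p i < \<delta>J)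
        \<longrightarrow> \<bar>(\<Sum>i<n. f (\<tau> i) * (g (p (Suc i)) - g (p i))) - J\<bar> < \<epsilon>"
      using J \<epsilon> unfolding has_RS_integral_def by blast
    obtain N :: nat where N: "(b - a) / min \<delta>I \<delta>J < real N"
      using reals_Archimedean2 by blast
    have \<delta>_pos: "min \<delta>I \<delta>J > 0" using \<delta>I \<delta>J by simp
    have "0 \<le> (b - a) / min \<delta>I \<delta>J" using ab \<delta>_pos by simp
    hence N_pos: "real N > 0" using N by linarith
    have "b - a < real N * min \<delta>I \<delta>J" using N \<delta>_pos by (simp add: divide_less_eq)
    hence mesh: "(b - a) / real N < min \<delta>I \<delta>J"
      using pos_divide_less_eq[OF N_pos] by (metis mult.commute)
    define p where "p = (\<lambda>i. a + real i * (b - a) / real N)"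
    have step: "p (Suc i) - p i = (b - a) / real N" for i
      by (simp add: p_def diff_divide_distrib[symmetric] add_divide_distrib[symmetric] algebra_simps)
    have "(b - a) / real N \<ge> 0" using ab by simp
    hence "p i \<le> p (Suc i)" "p (Suc i) - p i < min \<delta>I \<delta>J" for i
      using step[of i] mesh by linarith+
    moreover have "p 0 = a" "p N = b" using N_pos by (simp_all add: p_def)
    ultimately have partition: "p 0 = a \<and> p N = b \<and>
        (\<forall>i<N. p i \<le> p i \<and> p i \<le> p (Suc i) \<and> p (Suc i) - p i < min \<delta>I \<delta>J)"
      by blast
    have "\<bar>S - I\<bar> < \<epsilon> \<Longrightarrow> \<bar>S - J\<bar> < \<epsilon> \<Longrightarrow> \<bar>I - J\<bar> < 2 * \<epsilon>" for S
      by linarith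
    then show ?thesis
      using RS_I[rule_format, of p N p] RS_J[rule_format, of p N p] partition by simp
  qed
  from this[of "\<bar>I - J\<bar> / 2"] show ?thesis by (cases "I = J") auto
qed

lemma xi_by_parts:
  assumes "t \<ge> 0" and "continuous_on {0..t} (\<lambda>s. B s \<omega>)"
  shows "xi \<theta> B t \<omega> = exp (- \<theta> * t) * B t \<omega> - B 0 \<omega> + \<theta> * integral {0..t} (\<lambda>s. exp (- \<theta> * s) * B s \<omega>)"
proof -
  have "has_RS_integral (\<lambda>s. exp (- \<theta> * s)) (\<lambda>s. B s \<omega>) 0 t
      (exp (- \<theta> * t) * B t \<omega> - exp (- \<theta> * 0) * B 0 \<omega> - integral {0..t} (\<lambda>s. B s \<omega> * (- \<theta> * exp (- \<theta> * s))))"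
    by (rule has_RS_integral_by_parts) (auto intro!: derivative_eq_intros continuous_intros assms)
  hence "xi \<theta> B t \<omega> = exp (- \<theta> * t) * B t \<omega> - B 0 \<omega> - integral {0..t} (\<lambda>s. B s \<omega> * (- \<theta> * exp (- \<theta> * s)))"
    unfolding xi_def RS_integral_def using has_RS_integral_unique[OF assms(1)] by (auto intro: the_equality)
  also have "integral {0..t} (\<lambda>s. B s \<omega> * (- \<theta> * exp (- \<theta> * s))) = - \<theta> * integral {0..t} (\<lambda>s. exp (- \<theta> * s) * B s \<omega>)"
    by (simp add: mult.commute mult.left_commute)
  finally show ?thesis by simp
qed

section \<open>Limits along a path\<close>

lemma tendsto_at_top_of_tail_bound:
  fixes G :: "real \<Rightarrow> 'b::complete_space"
  assumes tail: "\<And>s t. s0 \<le> s \<Longrightarrow> s \<le> t \<Longrightarrow> dist (G t) (G s) \<le> E s"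
    and E: "(E \<longlongrightarrow> 0) at_top"
  shows "\<exists>L. (G \<longlongrightarrow> L) at_top"
proof -
  have cauchy: "cauchy_filter (filtermap G at_top)"
    unfolding cauchy_filter_metric_filtermap
  proof (intro allI impI)
    fix e :: real assume "e > 0"
    then obtain N where N: "\<And>s. s \<ge> N \<Longrightarrow> E s < e"
      using order_tendstoD(2)[OF E] by (auto simp: eventually_at_top_linorder)
    have "dist (G x) (G y) < e" if "max N s0 \<le> x" "max N s0 \<le> y" for x y
      using tail[of x y] tail[of y x] N[of x] N[of y] that by (cases "x \<le> y") (auto simp: dist_commute)
    thus "\<exists>P. eventually P at_top \<and> (\<forall>x y. P x \<and> P y \<longrightarrow> dist (G x) (G y) < e)"
      using eventually_ge_at_top[of "max N s0"] by blast
  qed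
  have "filtermap G at_top \<noteq> bot" by (simp add: filtermap_bot_iff)
  then obtain L where "filtermap G at_top \<le> nhds L"
    using cauchy_filter_complete_converges[OF cauchy complete_UNIV] by auto
  thus ?thesis unfolding filterlim_def by blast
qed

lemma exp_neg_tendsto_zero:
  fixes c K :: real
  assumes "c > 0" shows "((\<lambda>t. K * exp (- c * t)) \<longlongrightarrow> 0) at_top"
proof -
  have "filterlim (\<lambda>t. - c * t) at_bot at_top"
    using filterlim_tendsto_neg_mult_at_bot[of "\<lambda>_. - c" "- c" at_top "\<lambda>t. t"] filterlim_ident[of at_top] assms
    by simp
  thus ?thesis by (intro tendsto_mult_right_zero filterlim_compose[OF exp_at_bot])
qed

lemma abs_diff_le_of_derivative_le:
  fixes G F G' F' :: "real \<Rightarrow> real"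
  assumes "s \<le> t" and "continuous_on {s..t} G" and "continuous_on {s..t} F"
    and G: "\<And>z. s < z \<Longrightarrow> z < t \<Longrightarrow> (G has_real_derivative G' z) (at z)"
    and F: "\<And>z. s < z \<Longrightarrow> z < t \<Longrightarrow> (F has_real_derivative F' z) (at z)"
    and le: "\<And>z. s < z \<Longrightarrow> z < t \<Longrightarrow> \<bar>G' z\<bar> \<le> F' z"
  shows "\<bar>G t - G s\<bar> \<le> F t - F s"
proof -
  have "(\<lambda>u. F u + \<sigma> * G u) s \<le> (\<lambda>u. F u + \<sigma> * G u) t" if "\<sigma> \<in> {-1, 1}" for \<sigma> :: real
  proof (rule DERIV_nonneg_imp_increasing_open[OF assms(1)])
    fix z assume z: "s < z" "z < t"
    show "\<exists>y. ((\<lambda>u. F u + \<sigma> * G u) has_real_derivative y) (at z) \<and> 0 \<le> y"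
      using DERIV_add[OF F[OF z] DERIV_cmult[OF G[OF z], of \<sigma>]] le[OF z] that
      by (intro exI[of _ "F' z + \<sigma> * G' z"]) (auto simp: abs_le_iff)
  qed (intro continuous_intros assms)
  from this[of 1] this[of "-1"] show ?thesis by (simp add: abs_le_iff)
qed

lemma continuous_on_atLeast_iff_Icc:
  fixes f :: "real \<Rightarrow> 'b::topological_space"
  shows "continuous_on {a..} f \<longleftrightarrow> (\<forall>T. continuous_on {a..T} f)"
proof
  assume "\<forall>T. continuous_on {a..T} f"
  show "continuous_on {a..} f"
    unfolding continuous_on_eq_continuous_within
  proof
    fix t assume "t \<in> {a..}"
    have "at t within {a..} = at t within {a..t+1}"
      by (rule at_within_nhd[of _ "{..<t+1}"]) auto
    thus "continuous (at t within {a..}) f"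
      using \<open>\<forall>T. continuous_on {a..T} f\<close> \<open>t \<in> {a..}\<close>
      by (simp add: continuous_on_eq_continuous_within)
  qed
qed (auto intro: continuous_on_subset)

lemma integral_tendsto_at_top_of_exp_bound:
  fixes h :: "real \<Rightarrow> real"
  assumes c: "c > 0" and h: "continuous_on {0..} h"
    and bound: "\<And>z. z \<ge> 0 \<Longrightarrow> \<bar>h z\<bar> \<le> K * exp (- c * z)"
  shows "\<exists>L. ((\<lambda>t. integral {0..t} h) \<longlongrightarrow> L) at_top"
proof (rule tendsto_at_top_of_tail_bound)
  define G where "G = (\<lambda>t. integral {0..t} h)"
  define F where "F = (\<lambda>t. - K / c * exp (- c * t))"
  have K: "K \<ge> 0" using bound[of 0] by simp
  have hT: "continuous_on {0..T} h" for T using h by (rule continuous_on_subset) auto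
  have G_within: "(G has_real_derivative h z) (at z within {0..T})" if "z \<in> {0..T}" for z T
    unfolding G_def by (rule integral_has_real_derivative[OF hT that])
  have G_at: "(G has_real_derivative h z) (at z)" if "z > 0" for z
    using G_within[of z "z+1"] that by (simp add: at_within_interior[of z "{0..z+1}"])
  have F_at: "(F has_real_derivative K * exp (- c * z)) (at z)" for z
    unfolding F_def using c by (auto intro!: derivative_eq_intros)
  fix s t :: real assume st: "0 \<le> s" "s \<le> t"
  have "\<bar>G t - G s\<bar> \<le> F t - F s"
  proof (rule abs_diff_le_of_derivative_le[OF st(2) _ _ G_at F_at])
    show "continuous_on {s..t} G"
      using DERIV_continuous_on[OF G_within, of t] by (rule continuous_on_subset) (use st in auto)
    show "continuous_on {s..t} F" unfolding F_def by (intro continuous_intros)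
  qed (use st bound in auto)
  also have "\<dots> \<le> K / c * exp (- c * s)"
    using K c by (simp add: F_def)
  finally show "dist (integral {0..t} h) (integral {0..s} h) \<le> K / c * exp (- c * s)"
    by (simp add: G_def dist_real_def)
qed (rule exp_neg_tendsto_zero[OF c])

lemma damped_path_tendsto_of_exp_growth:
  fixes g :: "real \<Rightarrow> real"
  assumes \<theta>: "\<theta> > 0" and a: "a < \<theta>" and g: "continuous_on {0..} g"
    and growth: "\<And>s. s \<ge> 0 \<Longrightarrow> \<bar>g s\<bar> \<le> C * exp (a * s)"
  shows "\<exists>L. ((\<lambda>t. exp (- \<theta> * t) * g t + \<theta> * integral {0..t} (\<lambda>s. exp (- \<theta> * s) * g s)) \<longlongrightarrow> L) at_top"
proof -
  have damped: "\<bar>exp (- \<theta> * s) * g s\<bar> \<le> C * exp (- (\<theta> - a) * s)" if "s \<ge> 0" for s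
  proof -
    have "\<bar>exp (- \<theta> * s) * g s\<bar> \<le> exp (- \<theta> * s) * (C * exp (a * s))"
      using growth[OF that] by (simp add: abs_mult)
    also have "\<dots> = C * exp (- (\<theta> - a) * s)" by (simp add: exp_add[symmetric] algebra_simps)
    finally show ?thesis .
  qed
  have "((\<lambda>t. exp (- \<theta> * t) * g t) \<longlongrightarrow> 0) at_top"
    using damped a
    by (intro Lim_null_comparison[OF _ exp_neg_tendsto_zero[of "\<theta> - a" C]] eventually_mono[OF eventually_ge_at_top[of 0]])
      auto
  moreover have "continuous_on {0..} (\<lambda>s. exp (- \<theta> * s) * g s)"
    by (intro continuous_intros g)
  then obtain I where "((\<lambda>t. integral {0..t} (\<lambda>s. exp (- \<theta> * s) * g s)) \<longlongrightarrow> I) at_top"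
    using integral_tendsto_at_top_of_exp_bound[OF _ _ damped] a by auto
  ultimately have "((\<lambda>t. exp (- \<theta> * t) * g t + \<theta> * integral {0..t} (\<lambda>s. exp (- \<theta> * s) * g s))
      \<longlongrightarrow> 0 + \<theta> * I) at_top"
    by (intro tendsto_intros)
  thus ?thesis by blast
qed

lemma scaled_square_integral_tendsto:
  fixes x :: "real \<Rightarrow> real"
  assumes \<theta>: "\<theta> > 0" and x_cont: "continuous_on {0..} x" and x_lim: "(x \<longlongrightarrow> L) at_top"
  shows "((\<lambda>t. exp (- 2 * \<theta> * t) * (LBINT s=0..t. (exp (\<theta> * s) * x s)\<^sup>2)) \<longlongrightarrow> L\<^sup>2 / (2 * \<theta>)) at_top"
proof -
  define \<phi> where "\<phi> = (\<lambda>s. (exp (\<theta> * s) * x s)\<^sup>2)"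
  define N where "N = (\<lambda>t. LBINT s=0..t. \<phi> s)"
  have \<phi>_cont: "continuous_on {0..T} \<phi>" for T
    unfolding \<phi>_def by (intro continuous_intros continuous_on_subset[OF x_cont]) auto
  have N_deriv: "(N has_real_derivative \<phi> t) (at t)" if "t > 0" for t
  proof -
    have "(N has_vector_derivative \<phi> t) (at t within {0..t+1})"
      unfolding N_def using interval_integral_FTC2[of 0 0 "t+1" \<phi> t] \<phi>_cont[of "t+1"] that
      by (simp add: zero_ereal_def)
    thus ?thesis
      using that by (simp add: at_within_interior[of t "{0..t+1}"] has_real_derivative_iff_has_vector_derivative)
  qed
  have "((\<lambda>t. N t / exp (2 * \<theta> * t)) \<longlongrightarrow> L\<^sup>2 / (2 * \<theta>)) at_top"
  proof (rule lhospital_at_top_at_top)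
    show "filterlim (\<lambda>t. exp (2 * \<theta> * t)) at_top at_top"
      using \<theta> by (intro filterlim_compose[OF exp_at_top] filterlim_tendsto_pos_mult_at_top[OF tendsto_const _ filterlim_ident]) auto
    show "\<forall>\<^sub>F t in at_top. (N has_real_derivative \<phi> t) (at t)"
      using eventually_gt_at_top[of 0] by eventually_elim (rule N_deriv)
    show "\<forall>\<^sub>F t in at_top. ((\<lambda>t. exp (2 * \<theta> * t)) has_real_derivative 2 * \<theta> * exp (2 * \<theta> * t)) (at t)"
      by (intro always_eventually allI) (auto intro!: derivative_eq_intros)
    show "\<forall>\<^sub>F t in at_top. 2 * \<theta> * exp (2 * \<theta> * t) \<noteq> 0" using \<theta> by simp
    have "\<phi> t / (2 * \<theta> * exp (2 * \<theta> * t)) = (x t)\<^sup>2 / (2 * \<theta>)" for t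
      using \<theta> by (simp add: \<phi>_def power_mult_distrib exp_double[symmetric] mult.assoc)
    moreover have "((\<lambda>t. (x t)\<^sup>2 / (2 * \<theta>)) \<longlongrightarrow> L\<^sup>2 / (2 * \<theta>)) at_top"
      using \<theta> by (intro tendsto_intros x_lim) simp
    ultimately show "((\<lambda>t. \<phi> t / (2 * \<theta> * exp (2 * \<theta> * t))) \<longlongrightarrow> L\<^sup>2 / (2 * \<theta>)) at_top" by simp
  qed
  moreover have "exp (- 2 * \<theta> * t) * N t = N t / exp (2 * \<theta> * t)" for t
    by (simp add: exp_minus field_simps)
  ultimately show ?thesis by (simp add: N_def \<phi>_def)
qed

lemma xi_limits_of_exp_growth:
  fixes B :: "real \<Rightarrow> 'a \<Rightarrow> real"
  assumes \<theta>: "\<theta> > 0" and a: "a < \<theta>" and cont: "continuous_on {0..} (\<lambda>t. B t \<omega>)" and B0: "B 0 \<omega> = 0"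
    and growth: "\<And>s. s \<ge> 0 \<Longrightarrow> \<bar>B s \<omega>\<bar> \<le> C * exp (a * s)"
  shows "\<exists>L. ((\<lambda>t. xi \<theta> B t \<omega>) \<longlongrightarrow> L) at_top \<and>
           ((\<lambda>t. exp (- 2 * \<theta> * t) * (LBINT s=0..t. (exp (\<theta> * s) * xi \<theta> B s \<omega>)\<^sup>2))
              \<longlongrightarrow> L\<^sup>2 / (2 * \<theta>)) at_top"
proof -
  define x where "x = (\<lambda>t. exp (- \<theta> * t) * B t \<omega> + \<theta> * integral {0..t} (\<lambda>s. exp (- \<theta> * s) * B s \<omega>))"
  have xi_eq: "xi \<theta> B t \<omega> = x t" if "t \<ge> 0" for t
  proof -
    have "continuous_on {0..t} (\<lambda>s. B s \<omega>)" using cont by (rule continuous_on_subset) auto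
    from xi_by_parts[where B = B and \<omega> = \<omega> and \<theta> = \<theta>, OF that this] show ?thesis using B0 by (simp add: x_def)
  qed
  have "continuous_on {0..T} x" for T
    unfolding x_def using continuous_on_subset[OF cont]
    by (intro continuous_intros indefinite_integral_continuous_1 integrable_continuous_interval) auto
  hence "continuous_on {0..} x" by (simp add: continuous_on_atLeast_iff_Icc)
  hence xi_cont: "continuous_on {0..} (\<lambda>t. xi \<theta> B t \<omega>)"
    using continuous_on_cong[of "{0..}" "{0..}" "\<lambda>t. xi \<theta> B t \<omega>" x] xi_eq by simp
  obtain L where "(x \<longlongrightarrow> L) at_top"
    using damped_path_tendsto_of_exp_growth[OF \<theta> a cont growth] unfolding x_def by blast
  hence xi_lim: "((\<lambda>t. xi \<theta> B t \<omega>) \<longlongrightarrow> L) at_top"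
    by (rule tendsto_cong[THEN iffD1, rotated]) (auto intro: eventually_mono[OF eventually_ge_at_top[of 0]] simp: xi_eq)
  show ?thesis using scaled_square_integral_tendsto[OF \<theta> xi_cont xi_lim] xi_lim by blast
qed

section \<open>Dyadic chaining\<close>

text \<open>The \<open>\<ell>\<^sup>2\<close> norm rather than the maximum: it still dominates every single increment,
  and its mean is controlled by second moments alone.\<close>
definition dyadic_increments :: "(real \<Rightarrow> real) \<Rightarrow> real \<Rightarrow> nat \<Rightarrow> real" where
  "dyadic_increments g a k = sqrt (\<Sum>j<2^k. (g (a + (real j + 1) / 2^k) - g (a + real j / 2^k))\<^sup>2)"

lemma dyadic_increments_nonneg: "dyadic_increments g a k \<ge> 0"
  by (simp add: dyadic_increments_def sum_nonneg)

lemma dyadic_increment_le: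
  assumes "j < 2^k"
  shows "\<bar>g (a + (real j + 1) / 2^k) - g (a + real j / 2^k)\<bar> \<le> dyadic_increments g a k"
proof -
  have "(g (a + (real j + 1) / 2^k) - g (a + real j / 2^k))\<^sup>2
      \<le> (\<Sum>j<2^k. (g (a + (real j + 1) / 2^k) - g (a + real j / 2^k))\<^sup>2)"
    by (rule member_le_sum) (use assms in auto)
  thus ?thesis unfolding dyadic_increments_def using real_sqrt_le_mono by fastforce
qed

lemma floor_double_cases: "\<lfloor>2 * y\<rfloor> = 2 * \<lfloor>y\<rfloor> \<or> \<lfloor>2 * y\<rfloor> = 2 * \<lfloor>y\<rfloor> + 1" for y :: real
proof -
  have "2 * \<lfloor>y\<rfloor> \<le> \<lfloor>2 * y\<rfloor>" by (simp add: le_floor_iff)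
  moreover have "\<lfloor>2 * y\<rfloor> < 2 * \<lfloor>y\<rfloor> + 2" by (simp add: floor_less_iff) linarith
  ultimately show ?thesis by linarith
qed

lemma dyadic_floor_chain:
  fixes x :: real
  assumes x: "0 \<le> x" "x \<le> 1"
  shows "\<bar>g (a + \<lfloor>2^m * x\<rfloor> / 2^m) - g a\<bar> \<le> (\<Sum>k<Suc m. dyadic_increments g a k)"
proof (induction m)
  case 0
  have "0 \<le> \<lfloor>x\<rfloor>" "\<lfloor>x\<rfloor> \<le> 1" using x by (auto simp: floor_le_iff)
  hence "\<lfloor>x\<rfloor> = 0 \<or> \<lfloor>x\<rfloor> = 1" by linarith
  thus ?case using dyadic_increment_le[of 0 0 g a] dyadic_increments_nonneg[of g a 0] by auto
next
  case (Suc m)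
  define f where "f = \<lfloor>2^m * x\<rfloor>"
  have "2^m * x \<le> 2^m" using x by (simp add: mult_left_le)
  hence f: "0 \<le> f" "real_of_int f \<le> 2^m"
    using x of_int_floor_le[of "2^m * x"] unfolding f_def by (simp, linarith)
  have "\<lfloor>2^Suc m * x\<rfloor> = 2 * f \<or> \<lfloor>2^Suc m * x\<rfloor> = 2 * f + 1"
    using floor_double_cases[of "2^m * x"] by (simp add: f_def mult.assoc)
  thus ?case
  proof
    assume "\<lfloor>2^Suc m * x\<rfloor> = 2 * f"
    thus ?thesis using Suc.IH dyadic_increments_nonneg[of g a "Suc m"] by (simp add: f_def)
  next
    assume next_odd: "\<lfloor>2^Suc m * x\<rfloor> = 2 * f + 1"
    have "real_of_int (2 * f + 1) \<le> 2^Suc m * x"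
      unfolding next_odd[symmetric] by (rule of_int_floor_le)
    also have "\<dots> \<le> 2^Suc m" using x by (simp add: mult_left_le)
    finally have "real (Suc (nat (2 * f))) \<le> real (2^Suc m)" using f by simp
    hence j: "nat (2 * f) < 2^Suc m" by (simp only: of_nat_le_iff Suc_le_eq)
    have "\<bar>g (a + \<lfloor>2^Suc m * x\<rfloor> / 2^Suc m) - g (a + \<lfloor>2^m * x\<rfloor> / 2^m)\<bar> \<le> dyadic_increments g a (Suc m)"
      using dyadic_increment_le[OF j, of g a] f next_odd by (simp add: f_def)
    thus ?thesis using Suc.IH by simp
  qed
qed

lemma dyadic_chaining:
  fixes g :: "real \<Rightarrow> real"
  assumes g: "continuous_on {a..a+1} g" and summable: "summable (dyadic_increments g a)"
    and t: "t \<in> {a..a+1}"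
  shows "\<bar>g t - g a\<bar> \<le> (\<Sum>k. dyadic_increments g a k)"
proof -
  define x where "x = t - a"
  have x: "0 \<le> x" "x \<le> 1" using t by (auto simp: x_def)
  define t_approx where "t_approx = (\<lambda>m::nat. a + \<lfloor>2^m * x\<rfloor> / 2^m)"
  have approx_error: "0 \<le> t - t_approx m" "t - t_approx m \<le> (1/2)^m" for m
  proof -
    have "0 \<le> 2^m * x - \<lfloor>2^m * x\<rfloor>" "2^m * x - \<lfloor>2^m * x\<rfloor> \<le> 1" by linarith+
    moreover have "t - t_approx m = (2^m * x - \<lfloor>2^m * x\<rfloor>) / 2^m"
      by (simp add: t_approx_def x_def field_simps)
    ultimately show "0 \<le> t - t_approx m" "t - t_approx m \<le> (1/2)^m"
      by (simp_all add: divide_right_mono power_one_over)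
  qed
  have approx_in: "t_approx m \<in> {a..a+1}" for m
  proof -
    have "a \<le> t_approx m" using x by (simp add: t_approx_def)
    thus ?thesis using approx_error(1)[of m] t by simp
  qed
  have "(\<lambda>m. t - t_approx m) \<longlonglongrightarrow> 0"
    by (rule Lim_null_comparison[OF _ LIMSEQ_power_zero[of "1/2::real"]]) (use approx_error in auto)
  from tendsto_diff[OF tendsto_const[of t] this] have "t_approx \<longlonglongrightarrow> t" by simp
  hence "(\<lambda>m. \<bar>g (t_approx m) - g a\<bar>) \<longlonglongrightarrow> \<bar>g t - g a\<bar>"
    by (intro tendsto_intros continuous_on_tendsto_compose[OF g _ t] always_eventually allI approx_in)
  moreover have "\<bar>g (t_approx m) - g a\<bar> \<le> (\<Sum>k. dyadic_increments g a k)" for m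
    using dyadic_floor_chain[OF x, of g a m]
      sum_le_suminf[OF summable, of "{..<Suc m}"] dyadic_increments_nonneg[of g a]
    by (force simp: t_approx_def)
  ultimately show ?thesis by (intro LIMSEQ_le_const2) auto
qed

lemma abs_le_of_dyadic_increments_bound:
  fixes g :: "real \<Rightarrow> real"
  assumes g: "continuous_on {a..a+1} g" and R: "0 \<le> R"
    and bound: "ennreal \<bar>g a\<bar> + (\<Sum>k. ennreal (dyadic_increments g a k)) \<le> ennreal R"
    and t: "t \<in> {a..a+1}"
  shows "\<bar>g t\<bar> \<le> R"
proof -
  have "(\<Sum>k. ennreal (dyadic_increments g a k)) \<le> ennreal R"
    using bound by (rule order_trans[rotated]) simp
  hence summable: "summable (dyadic_increments g a)"
    by (intro summable_suminf_not_top dyadic_increments_nonneg) (auto simp: top_unique)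
  have "ennreal (\<bar>g a\<bar> + (\<Sum>k. dyadic_increments g a k)) \<le> ennreal R"
    using bound by (simp add: suminf_ennreal2[OF dyadic_increments_nonneg summable] ennreal_plus
      suminf_nonneg[OF summable dyadic_increments_nonneg])
  hence "\<bar>g a\<bar> + (\<Sum>k. dyadic_increments g a k) \<le> R" using R by (simp add: ennreal_le_iff)
  thus ?thesis using dyadic_chaining[OF g summable t] by linarith
qed

section \<open>Exponential growth bound for fractional Brownian motion\<close>

lemma fBm_prob_space: "fBm M H B \<Longrightarrow> prob_space M"
  by (simp add: fBm_def)

lemma fBm_measurable: "fBm M H B \<Longrightarrow> t \<ge> 0 \<Longrightarrow> B t \<in> borel_measurable M"
  by (simp add: fBm_def)

lemma fBm_normal:
  assumes "fBm M H B" and "t \<ge> 0"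
  shows "normal_rv M (B t)"
proof -
  have "\<forall>I c. finite I \<longrightarrow> I \<subseteq> {0..} \<longrightarrow> normal_rv M (\<lambda>\<omega>. \<Sum>t\<in>I. c t * B t \<omega>)"
    using assms(1) unfolding fBm_def by (elim conjE)
  hence "normal_rv M (\<lambda>\<omega>. \<Sum>u\<in>{t}. 1 * B u \<omega>)"
    using assms(2) by (elim allE[of _ "{t}"] allE[of _ "\<lambda>_. 1"]) simp
  thus ?thesis by simp
qed

lemma fBm_covariance:
  "fBm M H B \<Longrightarrow> s \<ge> 0 \<Longrightarrow> t \<ge> 0 \<Longrightarrow>
    integral\<^sup>L M (\<lambda>\<omega>. B t \<omega> * B s \<omega>) = (t powr (2*H) + s powr (2*H) - \<bar>t - s\<bar> powr (2*H)) / 2"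
  by (simp add: fBm_def)

lemma normal_rv_square_integrable:
  assumes "prob_space M" and "normal_rv M X"
  shows "integrable M (\<lambda>\<omega>. (X \<omega>)\<^sup>2)"
proof -
  interpret prob_space M by fact
  have X: "X \<in> borel_measurable M" using assms(2) by (simp add: normal_rv_def)
  consider \<mu> \<sigma> where "\<sigma> > 0" "distributed M lborel X (normal_density \<mu> \<sigma>)"
    | c where "AE \<omega> in M. X \<omega> = c"
    using assms(2) unfolding normal_rv_def by blast
  thus ?thesis
  proof cases
    case (1 \<mu> \<sigma>)
    have "integrable lborel (\<lambda>x. normal_density \<mu> \<sigma> x * (x - \<mu>)\<^sup>2
        + 2 * \<mu> * (normal_density \<mu> \<sigma> x * x) - \<mu>\<^sup>2 * normal_density \<mu> \<sigma> x)"
      using integrable_normal_moment[OF 1(1), of \<mu> 2] integrable_normal_moment_nz_1[OF 1(1), of \<mu>]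
        integrable_normal_density[OF 1(1), of \<mu>] by simp
    moreover have "normal_density \<mu> \<sigma> x * (x - \<mu>)\<^sup>2 + 2 * \<mu> * (normal_density \<mu> \<sigma> x * x)
        - \<mu>\<^sup>2 * normal_density \<mu> \<sigma> x = normal_density \<mu> \<sigma> x * x\<^sup>2" for x
      by (simp add: power2_eq_square algebra_simps)
    ultimately show ?thesis using distributed_integrable[OF 1(2), of "\<lambda>x. x\<^sup>2"] by simp
  next
    case (2 c)
    hence "AE \<omega> in M. c\<^sup>2 = (X \<omega>)\<^sup>2" by auto
    thus ?thesis using X integrable_cong_AE[of "\<lambda>_. c\<^sup>2" M "\<lambda>\<omega>. (X \<omega>)\<^sup>2"] by simp
  qed
qed

lemma fBm_product_integrable:
  assumes F: "fBm M H B" and "s \<ge> 0" and "t \<ge> 0"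
  shows "integrable M (\<lambda>\<omega>. B t \<omega> * B s \<omega>)"
proof (rule Bochner_Integration.integrable_bound)
  show "integrable M (\<lambda>\<omega>. (B t \<omega>)\<^sup>2 + (B s \<omega>)\<^sup>2)"
    using normal_rv_square_integrable[OF fBm_prob_space fBm_normal, OF F] assms by auto
  show "(\<lambda>\<omega>. B t \<omega> * B s \<omega>) \<in> borel_measurable M"
    using fBm_measurable[OF F] assms by measurable
  have "\<bar>x * y\<bar> \<le> x\<^sup>2 + y\<^sup>2" for x y :: real
    using sum_squares_bound[of "\<bar>x\<bar>" "\<bar>y\<bar>"] abs_ge_zero[of "x * y"]
    unfolding abs_mult power2_abs by linarith
  thus "AE \<omega> in M. norm (B t \<omega> * B s \<omega>) \<le> norm ((B t \<omega>)\<^sup>2 + (B s \<omega>)\<^sup>2)"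
    by simp
qed

lemma fBm_increment_second_moment:
  assumes F: "fBm M H B" and s: "s \<ge> 0" and t: "t \<ge> 0"
  shows "integrable M (\<lambda>\<omega>. (B t \<omega> - B s \<omega>)\<^sup>2)"
    and "integral\<^sup>L M (\<lambda>\<omega>. (B t \<omega> - B s \<omega>)\<^sup>2) = \<bar>t - s\<bar> powr (2*H)"
proof -
  have expand: "(\<lambda>\<omega>. (B t \<omega> - B s \<omega>)\<^sup>2) = (\<lambda>\<omega>. B t \<omega> * B t \<omega> - 2 * (B t \<omega> * B s \<omega>) + B s \<omega> * B s \<omega>)"
    by (auto simp: power2_eq_square algebra_simps)
  note integrable = fBm_product_integrable[OF F t t] fBm_product_integrable[OF F s t]
    fBm_product_integrable[OF F s s]
  show "integrable M (\<lambda>\<omega>. (B t \<omega> - B s \<omega>)\<^sup>2)"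
    unfolding expand using integrable by simp
  show "integral\<^sup>L M (\<lambda>\<omega>. (B t \<omega> - B s \<omega>)\<^sup>2) = \<bar>t - s\<bar> powr (2*H)"
    unfolding expand using integrable fBm_covariance[OF F t t] fBm_covariance[OF F s t]
      fBm_covariance[OF F s s] by simp
qed

lemma (in prob_space) nn_integral_sqrt_le:
  assumes Y: "integrable M Y" and Y_nonneg: "\<And>\<omega>. Y \<omega> \<ge> 0"
    and a: "a > 0" and mean: "expectation Y \<le> a\<^sup>2"
  shows "(\<integral>\<^sup>+\<omega>. ennreal (sqrt (Y \<omega>)) \<partial>M) \<le> ennreal a"
proof -
  have am_gm: "sqrt (Y \<omega>) \<le> (Y \<omega> / a + a) / 2" for \<omega>
  proof -
    have "0 \<le> (sqrt (Y \<omega>) - a)\<^sup>2" by simp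
    hence "2 * a * sqrt (Y \<omega>) \<le> Y \<omega> + a\<^sup>2"
      using Y_nonneg[of \<omega>] by (simp add: power2_eq_square algebra_simps)
    thus ?thesis using a by (simp add: field_simps power2_eq_square)
  qed
  have "(\<integral>\<^sup>+\<omega>. ennreal (sqrt (Y \<omega>)) \<partial>M) \<le> (\<integral>\<^sup>+\<omega>. ennreal ((Y \<omega> / a + a) / 2) \<partial>M)"
    by (intro nn_integral_mono ennreal_leI am_gm)
  also have "\<dots> = ennreal (expectation (\<lambda>\<omega>. (Y \<omega> / a + a) / 2))"
    by (rule nn_integral_eq_integral) (use Y Y_nonneg a in auto)
  also have "\<dots> \<le> ennreal a"
  proof (rule ennreal_leI)
    have "expectation (\<lambda>\<omega>. (Y \<omega> / a + a) / 2) = (expectation Y / a + a) / 2"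
      using Y by (simp add: prob_space)
    thus "expectation (\<lambda>\<omega>. (Y \<omega> / a + a) / 2) \<le> a"
      using mean a by (simp add: divide_le_eq power2_eq_square)
  qed
  finally show ?thesis .
qed

lemma nn_integral_fBm_dyadic_increments_le:
  assumes F: "fBm M H B" and a: "a \<ge> 0"
  shows "(\<integral>\<^sup>+\<omega>. ennreal (dyadic_increments (\<lambda>t. B t \<omega>) a k) \<partial>M) \<le> ennreal ((2 powr (1/2 - H))^k)"
proof -
  interpret prob_space M using fBm_prob_space[OF F] .
  define incr where "incr = (\<lambda>j \<omega>. (B (a + (real j + 1) / 2^k) \<omega> - B (a + real j / 2^k) \<omega>)\<^sup>2)"
  have nonneg: "a + (real j + 1) / 2^k \<ge> 0" "a + real j / 2^k \<ge> 0" for j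
    using a by auto
  have integrable: "integrable M (incr j)" for j
    unfolding incr_def by (intro fBm_increment_second_moment(1)[OF F] nonneg)
  have sum_integrable: "integrable M (\<lambda>\<omega>. \<Sum>j<2^k. incr j \<omega>)"
    by (intro Bochner_Integration.integrable_sum integrable)
  have "expectation (\<lambda>\<omega>. \<Sum>j<2^k. incr j \<omega>) = (\<Sum>j<(2::nat)^k. expectation (incr j))"
    by (rule Bochner_Integration.integral_sum) (rule integrable)
  also have "\<dots> = (\<Sum>j<(2::nat)^k. (1 / 2^k) powr (2*H))"
    using fBm_increment_second_moment(2)[OF F nonneg(2) nonneg(1)] by (simp add: incr_def add_divide_distrib)
  also have "\<dots> = ((2 powr (1/2 - H))^k)\<^sup>2"
    by (simp add: powr_realpow[symmetric] powr_minus_divide[symmetric] powr_powr powr_add[symmetric]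
      powr_power algebra_simps flip: powr_mult_base)
  finally have "(\<integral>\<^sup>+\<omega>. ennreal (sqrt (\<Sum>j<2^k. incr j \<omega>)) \<partial>M) \<le> ennreal ((2 powr (1/2 - H))^k)"
    by (intro nn_integral_sqrt_le[OF sum_integrable]) (auto intro: sum_nonneg simp: incr_def)
  thus ?thesis by (simp add: dyadic_increments_def incr_def)
qed

lemma nn_integral_abs_fBm_le:
  assumes F: "fBm M H B" and H: "0 \<le> H" "H \<le> 1" and t: "t \<ge> 0"
  shows "(\<integral>\<^sup>+\<omega>. ennreal \<bar>B t \<omega>\<bar> \<partial>M) \<le> ennreal (t + 1)"
proof -
  interpret prob_space M using fBm_prob_space[OF F] .
  have "t powr (2*H) \<le> (t + 1)\<^sup>2"
  proof (cases "t \<le> 1")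
    case True
    hence "t powr (2*H) \<le> 1" using H t by (intro powr_le1) auto
    also have "\<dots> \<le> (t + 1)\<^sup>2" using t one_le_power[of "t + 1" 2] by simp
    finally show ?thesis .
  next
    case False
    hence "t powr (2*H) \<le> t powr 2" using H by (intro powr_mono) auto
    also have "\<dots> = t\<^sup>2" using False by (simp add: powr_realpow)
    also have "\<dots> \<le> (t + 1)\<^sup>2" using t by (intro power_mono) auto
    finally show ?thesis .
  qed
  hence "expectation (\<lambda>\<omega>. (B t \<omega>)\<^sup>2) \<le> (t + 1)\<^sup>2"
    using fBm_covariance[OF F t t] by (simp add: power2_eq_square)
  hence "(\<integral>\<^sup>+\<omega>. ennreal (sqrt ((B t \<omega>)\<^sup>2)) \<partial>M) \<le> ennreal (t + 1)"
    using t by (intro nn_integral_sqrt_le normal_rv_square_integrable[OF prob_space_axioms fBm_normal[OF F t]]) auto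
  thus ?thesis by simp
qed


lemma AE_bounded_of_suminf_nn_integral:
  fixes X :: "nat \<Rightarrow> 'a \<Rightarrow> ennreal"
  assumes "\<And>n. X n \<in> borel_measurable M" and "(\<Sum>n. \<integral>\<^sup>+\<omega>. X n \<omega> \<partial>M) < \<infinity>"
  shows "AE \<omega> in M. \<exists>R\<ge>0. \<forall>n. X n \<omega> \<le> ennreal R"
proof -
  have "(\<integral>\<^sup>+\<omega>. (\<Sum>n. X n \<omega>) \<partial>M) \<noteq> \<infinity>"
    using assms by (simp add: nn_integral_suminf)
  hence "AE \<omega> in M. (\<Sum>n. X n \<omega>) \<noteq> \<infinity>"
    using assms(1) by (intro nn_integral_PInf_AE) auto
  thus ?thesis
  proof eventually_elim
    fix \<omega> assume finite: "(\<Sum>n. X n \<omega>) \<noteq> \<infinity>"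
    have "X n \<omega> \<le> (\<Sum>n. X n \<omega>)" for n
      using sum_le_suminf[OF summableI, of "{n}" "\<lambda>n. X n \<omega>"] by simp
    also have "\<dots> = ennreal (enn2real (\<Sum>n. X n \<omega>))"
      using finite by (simp add: less_top)
    finally have "X n \<omega> \<le> ennreal (enn2real (\<Sum>n. X n \<omega>))" for n .
    thus "\<exists>R\<ge>0. \<forall>n. X n \<omega> \<le> ennreal R" by (intro exI[of _ "enn2real (\<Sum>n. X n \<omega>)"]) auto
  qed
qed

lemma summable_exp_neg_mult_linear:
  fixes c b :: real
  assumes c: "c > 0"
  shows "summable (\<lambda>n. exp (- c * real n) * (real n + b))"
proof (rule summable_comparison_test_bigo)
  show "summable (\<lambda>n. norm (exp (- (c / 2) * real n)))"
  proof -
    have "exp (- (c / 2) * real n) = exp (- (c / 2)) ^ n" for n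
      by (simp add: exp_of_nat_mult[symmetric] mult.commute)
    thus ?thesis using c by simp
  qed
  show "(\<lambda>n. exp (- c * real n) * (real n + b)) \<in> O(\<lambda>n. exp (- (c / 2) * real n))"
    using c by real_asymp
qed

lemma fBm_dyadic_increments_measurable:
  assumes F: "fBm M H B" and a: "a \<ge> 0"
  shows "(\<lambda>\<omega>. dyadic_increments (\<lambda>t. B t \<omega>) a k) \<in> borel_measurable M"
proof -
  have [measurable]: "B (a + (real j + 1) / 2^k) \<in> borel_measurable M" "B (a + real j / 2^k) \<in> borel_measurable M"
    for j using a by (auto intro: fBm_measurable[OF F])
  show ?thesis unfolding dyadic_increments_def by measurable
qed

lemma nn_integral_fBm_unit_interval_le:
  assumes F: "fBm M H B" and H: "1/2 < H" "H \<le> 1" and a: "a \<ge> 0"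
  shows "(\<integral>\<^sup>+\<omega>. ennreal \<bar>B a \<omega>\<bar> + (\<Sum>k. ennreal (dyadic_increments (\<lambda>t. B t \<omega>) a k)) \<partial>M)
    \<le> ennreal (a + 1 + 1 / (1 - 2 powr (1/2 - H)))"
proof -
  define r where "r = (2::real) powr (1/2 - H)"
  have r: "0 < r" "r < 1"
    using H powr_less_mono[of "1/2 - H" 0 2] by (auto simp: r_def)
  note [measurable] = fBm_measurable[OF F a] fBm_dyadic_increments_measurable[OF F a]
  have "(\<integral>\<^sup>+\<omega>. ennreal \<bar>B a \<omega>\<bar> + (\<Sum>k. ennreal (dyadic_increments (\<lambda>t. B t \<omega>) a k)) \<partial>M)
      = (\<integral>\<^sup>+\<omega>. ennreal \<bar>B a \<omega>\<bar> \<partial>M) + (\<Sum>k. \<integral>\<^sup>+\<omega>. ennreal (dyadic_increments (\<lambda>t. B t \<omega>) a k) \<partial>M)"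
    by (simp add: nn_integral_add nn_integral_suminf)
  also have "\<dots> \<le> ennreal (a + 1) + (\<Sum>k. ennreal (r^k))"
    using nn_integral_abs_fBm_le[OF F _ H(2) a] nn_integral_fBm_dyadic_increments_le[OF F a] H
    by (intro add_mono suminf_le) (auto simp: r_def)
  also have "(\<Sum>k. ennreal (r^k)) = ennreal (1 / (1 - r))"
    using r by (simp add: suminf_ennreal2 suminf_geometric)
  finally show ?thesis using r a by (simp add: r_def ennreal_plus[symmetric] del: ennreal_plus)
qed

lemma fBm_exp_growth:
  assumes F: "fBm M H B" and H: "1/2 < H" "H \<le> 1" and c: "c > 0"
    and cont: "AE \<omega> in M. continuous_on {0..} (\<lambda>t. B t \<omega>)"
  shows "AE \<omega> in M. \<exists>C. \<forall>s\<ge>0. \<bar>B s \<omega>\<bar> \<le> C * exp (c * s)"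
proof -
  txt \<open>Weighting the unit interval \<open>[n, n + 1]\<close> by \<open>e\<^sup>-\<^sup>c\<^sup>n\<close> makes the total expected mass
    finite, so almost surely all weighted bounds are uniformly bounded.\<close>
  define b where "b = 1 + 1 / (1 - 2 powr (1/2 - H))"
  have "2 powr (1/2 - H) < (2::real) powr 0" using H by (intro powr_less_mono) auto
  hence b: "b \<ge> 0" by (simp add: b_def)
  define Y where "Y = (\<lambda>n \<omega>. ennreal \<bar>B (real n) \<omega>\<bar> + (\<Sum>k. ennreal (dyadic_increments (\<lambda>t. B t \<omega>) (real n) k)))"
  define X where "X = (\<lambda>n \<omega>. ennreal (exp (- c * real n)) * Y n \<omega>)"
  have [measurable]: "B (real n) \<in> borel_measurable M" "(\<lambda>\<omega>. dyadic_increments (\<lambda>t. B t \<omega>) (real n) k) \<in> borel_measurable M"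
    for n k by (simp_all add: fBm_measurable[OF F] fBm_dyadic_increments_measurable[OF F])
  have X_meas: "X n \<in> borel_measurable M" for n unfolding X_def Y_def by measurable
  have "(\<Sum>n. \<integral>\<^sup>+\<omega>. X n \<omega> \<partial>M) \<le> (\<Sum>n. ennreal (exp (- c * real n) * (real n + b)))"
  proof (intro suminf_le)
    fix n
    have "(\<integral>\<^sup>+\<omega>. X n \<omega> \<partial>M) = ennreal (exp (- c * real n)) * (\<integral>\<^sup>+\<omega>. Y n \<omega> \<partial>M)"
      unfolding X_def by (rule nn_integral_cmult) (simp add: Y_def)
    also have "\<dots> \<le> ennreal (exp (- c * real n)) * ennreal (real n + b)"
      using nn_integral_fBm_unit_interval_le[OF F H, of "real n"] by (intro mult_left_mono) (auto simp: Y_def b_def add.assoc)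
    finally show "(\<integral>\<^sup>+\<omega>. X n \<omega> \<partial>M) \<le> ennreal (exp (- c * real n) * (real n + b))"
      using b by (simp add: ennreal_mult)
  qed auto
  also have "\<dots> < \<infinity>"
    using summable_exp_neg_mult_linear[OF c, of b] b by (simp add: ennreal_suminf_neq_top less_top)
  finally have "AE \<omega> in M. \<exists>R\<ge>0. \<forall>n. X n \<omega> \<le> ennreal R"
    by (intro AE_bounded_of_suminf_nn_integral X_meas)
  with cont show ?thesis
  proof eventually_elim
    case (elim \<omega>)
    then obtain R where R: "R \<ge> 0" "\<And>n. X n \<omega> \<le> ennreal R" by blast
    have "\<bar>B s \<omega>\<bar> \<le> R * exp (c * s)" if s: "s \<ge> 0" for s
    proof -
      define n where "n = nat \<lfloor>s\<rfloor>"
      have n: "real n \<le> s" "s \<le> real n + 1" using s by (auto simp: n_def)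
      have "Y n \<omega> = ennreal (exp (c * real n)) * X n \<omega>"
        by (simp add: X_def ennreal_mult[symmetric] mult.assoc[symmetric] exp_add[symmetric])
      also have "\<dots> \<le> ennreal (R * exp (c * real n))"
        using R mult_left_mono[OF R(2)[of n], of "ennreal (exp (c * real n))"]
        by (simp add: ennreal_mult mult.commute)
      finally have "\<bar>B s \<omega>\<bar> \<le> R * exp (c * real n)"
        using elim(1) R(1) n unfolding Y_def
        by (intro abs_le_of_dyadic_increments_bound[where g = "\<lambda>t. B t \<omega>"]) (auto intro: continuous_on_subset)
      also have "\<dots> \<le> R * exp (c * s)" using R(1) c n by (intro mult_left_mono) auto
      finally show ?thesis .
    qed
    thus ?case by blast
  qed
qed

theorem mainTheorem3:
  fixes M :: "'a measure" and B :: "real \<Rightarrow> 'a \<Rightarrow> real" and H \<theta> :: real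
  assumes "1/2 < H" and "H < 1" and "\<theta> > 0"
    and "fBm M H B"
    and "AE \<omega> in M. continuous_on {0..} (\<lambda>t. B t \<omega>)"
  shows "AE \<omega> in M. \<exists>L::real.
           ((\<lambda>t. xi \<theta> B t \<omega>) \<longlongrightarrow> L) at_top \<and>
           ((\<lambda>t. exp (- 2 * \<theta> * t) * (LBINT s=0..t. (exp (\<theta> * s) * xi \<theta> B s \<omega>)\<^sup>2))
              \<longlongrightarrow> L\<^sup>2 / (2 * \<theta>)) at_top"
proof -
  have "AE \<omega> in M. \<exists>C. \<forall>s\<ge>0. \<bar>B s \<omega>\<bar> \<le> C * exp (\<theta> / 2 * s)"
    using assms by (intro fBm_exp_growth) auto
  moreover have "AE \<omega> in M. B 0 \<omega> = 0" using assms(4) by (simp add: fBm_def)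
  ultimately show ?thesis using assms(5)
  proof eventually_elim
    case (elim \<omega>)
    then obtain C where "\<And>s. s \<ge> 0 \<Longrightarrow> \<bar>B s \<omega>\<bar> \<le> C * exp (\<theta> / 2 * s)" by blast
    with elim assms(3) show ?case by (intro xi_limits_of_exp_growth[where a = "\<theta> / 2"]) auto
  qed
qed

end
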